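(* Let $G$ be the lattice $\mathbb Z$ (neighbours $x\pm1$), unweighted, with $\mu\equiv1$, so $\Delta u(x)=u(x+1)-2u(x)+u(x-1)$ and $L=-\Delta$. Then for every $v:\mathbb Z\to\mathbb R$ and $x\in\mathbb Z$, $$\Delta\Psi_{\Upsilon'}(v)(x)\ge2e^{-Lv(x)/2}\,\Upsilon(Lv(x))+\Theta(v)(x),\qquad \Theta(v)(x):=\sum_{y\in\{x-1,x+1\}}e^{v(y)-v(x)}\big(e^{-Lv(y)}-1+Lv(x)\big).$$ Moreover, if $Lv(x)\ge1$, then $\Theta(v)(x)\ge2e^{-Lv(x)/2}(Lv(x)-1)$.
   Context: $\Psi_H(v)(x)=\sum_{y\in\{x-1,x+1\}}H(v(y)-v(x))$; $\Upsilon(z)=e^z-1-z$, $\Upsilon'(z)=e^z-1$. *)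

theory Defs
  imports Complex_Main
begin

definition lap :: "(int \<Rightarrow> real) \<Rightarrow> int \<Rightarrow> real" where
  "lap u x = u (x + 1) - 2 * u x + u (x - 1)"

definition Lop :: "(int \<Rightarrow> real) \<Rightarrow> int \<Rightarrow> real" where
  "Lop u x = - lap u x"

definition Psi :: "(real \<Rightarrow> real) \<Rightarrow> (int \<Rightarrow> real) \<Rightarrow> int \<Rightarrow> real" where
  "Psi H v x = (\<Sum>y\<in>{x - 1, x + 1}. H (v y - v x))"

definition Upsilon :: "real \<Rightarrow> real" where
  "Upsilon z = exp z - 1 - z"

definition Upsilon' :: "real \<Rightarrow> real" where
  "Upsilon' z = exp z - 1"

definition Theta :: "(int \<Rightarrow> real) \<Rightarrow> int \<Rightarrow> real" where
  "Theta v x = (\<Sum>y\<in>{x - 1, x + 1}. exp (v y - v x) * (exp (- Lop v y) - 1 + Lop v x))"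

end

theory Submission
  imports Defs
begin

text \<open>Put \<open>S = Psi exp v x = exp a + exp b\<close> with \<open>a = v(x-1) - v(x)\<close>, \<open>b = v(x+1) - v(x)\<close>,
  so that \<open>a + b = - Lop v x\<close>. Expanding the exponentials gives two exact identities:
  \<open>lap (Psi Upsilon' v) x - Theta v x = S * Upsilon (Lop v x)\<close>, and \<open>Theta v x\<close> equals
  \<open>S * (Lop v x - 1)\<close> plus two positive exponentials. Both claims then follow from
  \<open>Upsilon \<ge> 0\<close> and the AM-GM bound \<open>S \<ge> 2 exp ((a + b) / 2) = 2 exp (- Lop v x / 2)\<close>.\<close>

lemma exp_add_exp_ge: "2 * exp ((a + b) / 2) \<le> exp a + exp b" for a b :: real
proof -
  have "exp a + exp b - 2 * exp ((a + b) / 2) = (exp (a / 2) - exp (b / 2))\<^sup>2"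
    by (simp add: power2_eq_square algebra_simps add_divide_distrib flip: exp_add)
  then show ?thesis
    by (metis diff_ge_0_iff_ge zero_le_power2)
qed

lemma Upsilon_nonneg: "0 \<le> Upsilon z"
  using exp_ge_add_one_self[of z] unfolding Upsilon_def by linarith

lemma Lop_eq: "Lop v x = 2 * v x - v (x + 1) - v (x - 1)"
  by (simp add: Lop_def lap_def)

lemma Psi_eq: "Psi H v x = H (v (x - 1) - v x) + H (v (x + 1) - v x)"
  by (simp add: Psi_def)

lemma Psi_Upsilon'_eq: "Psi Upsilon' v x = Psi exp v x - 2"
  by (simp add: Psi_eq Upsilon'_def)

lemma Psi_exp_ge: "2 * exp (- Lop v x / 2) \<le> Psi exp v x"
proof -
  have "- Lop v x = (v (x - 1) - v x) + (v (x + 1) - v x)"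
    by (simp add: Lop_eq)
  then show ?thesis
    using exp_add_exp_ge[of "v (x - 1) - v x" "v (x + 1) - v x"] by (simp add: Psi_eq)
qed

lemma Theta_eq:
  "Theta v x = exp (v (x - 2) - v (x - 1)) + exp (v (x + 2) - v (x + 1))
     + Psi exp v x * (Lop v x - 1)"
proof -
  have "exp (v (x - 1) - v x) * exp (- Lop v (x - 1)) = exp (v (x - 2) - v (x - 1))"
    "exp (v (x + 1) - v x) * exp (- Lop v (x + 1)) = exp (v (x + 2) - v (x + 1))"
    by (simp_all add: Lop_eq algebra_simps flip: exp_add)
  then show ?thesis
    by (simp add: Theta_def Psi_eq algebra_simps)
qed

lemma lap_Psi_Upsilon'_eq: "lap (Psi Upsilon' v) x = Theta v x + Psi exp v x * Upsilon (Lop v x)"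
proof -
  have "exp (v x - v (x + 1)) = exp (v (x - 1) - v x) * exp (Lop v x)"
    "exp (v x - v (x - 1)) = exp (v (x + 1) - v x) * exp (Lop v x)"
    by (simp_all add: Lop_eq algebra_simps flip: exp_add)
  moreover have "x + 1 + 1 = x + 2" "x - 1 - 1 = x - 2" "x + 1 - 1 = x" "x - 1 + 1 = x"
    by simp_all
  ultimately show ?thesis
    unfolding lap_def Psi_Upsilon'_eq Theta_eq Upsilon_def
    by (simp add: Psi_eq algebra_simps)
qed

theorem lemma5p5:
  fixes v :: "int \<Rightarrow> real" and x :: int
  shows "lap (Psi Upsilon' v) x \<ge> 2 * exp (- Lop v x / 2) * Upsilon (Lop v x) + Theta v x
     \<and> (Lop v x \<ge> 1 \<longrightarrow> Theta v x \<ge> 2 * exp (- Lop v x / 2) * (Lop v x - 1))"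
proof (intro conjI impI)
  show "lap (Psi Upsilon' v) x \<ge> 2 * exp (- Lop v x / 2) * Upsilon (Lop v x) + Theta v x"
    using mult_right_mono[OF Psi_exp_ge Upsilon_nonneg] by (simp add: lap_Psi_Upsilon'_eq)
next
  assume "Lop v x \<ge> 1"
  then have "2 * exp (- Lop v x / 2) * (Lop v x - 1) \<le> Psi exp v x * (Lop v x - 1)"
    using mult_right_mono[OF Psi_exp_ge] by simp
  moreover have "0 < exp (v (x - 2) - v (x - 1)) + exp (v (x + 2) - v (x + 1))"
    by (simp add: add_pos_pos)
  ultimately show "Theta v x \<ge> 2 * exp (- Lop v x / 2) * (Lop v x - 1)"
    by (simp add: Theta_eq)
qed

end
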